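(* With $z^3=t(1-t)^2$, one has \[ \sum_{i\ge0}(\tau_i-t\tau_{i-1})w^i=\frac{w(1-tw)}{1-2w+w^2-z^3w^3}=\frac{w}{1-(2-t)w+(1-t)^2w^2}, \] (with $\tau_{-1}=0$), and hence, for all $i\ge0$, \[ \tau_i-t\tau_{i-1}=\frac{\mu_3^i-\mu_2^i}{\mu_3-\mu_2},\qquad \mu_{2,3}=\frac{2-t\mp W}{2},\ W=\sqrt{4t-3t^2}. \] Consequently, for every fixed $i\ge1$, $\lim_{n\to\infty}D_{n,i}/D_n=\dfrac{t^i}{z^{2i+1}}\cdot\dfrac{\mu_3^i-\mu_2^i}{\mu_3-\mu_2}$ (coefficientwise as formal power series in $z$).
   Context: $\tau_i=\tau_i(z)$ are defined by $\sum_{i\ge0}\tau_iw^i=\frac{w}{1-2w+w^2-z^3w^3}$. $t$ is the power series in $z$ with $z^3=t(1-t)^2$, $t=z^3+O(z^6)$. $\mu_2,\mu_3$ are the roots of $X^2-(2-t)X+(1-t)^2$, so $\mu_2+\mu_3=2-t$, $\mu_2\mu_3=(1-t)^2$. For $h\ge1$, $D_h$ is the determinant of the $h\times h$ matrix $T_h$ (indices $0,\dots,h-1$) with $(T_h)_{p,p}=1$, $(T_h)_{p,p+1}=-2z$, $(T_h)_{p,p+2}=z^2$, $(T_h)_{p+1,p}=-z^2$, other entries $0$; $D_0=1$. $D_{n,i}$ is the determinant of $T_n^{\mathsf T}$ with its $i$-th column (columns numbered $1,\dots,n$) replaced by $(1,0,\dots,0)^{\mathsf T}$. *)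

theory Defs
  imports "HOL-Computational_Algebra.Formal_Power_Series" "Jordan_Normal_Form.Determinant"
begin

text \<open>All power series in z are of type complex fps (z = fps_X).
  Bivariate generating functions in w are of type complex fps fps (w = outer fps_X),
  with the inner series embedded by fps_const.\<close>

definition tau_gf :: "complex fps fps" where
  "tau_gf = fps_X / (1 - 2 * fps_X + fps_X ^ 2 - fps_const (fps_X ^ 3) * fps_X ^ 3)"

definition tau :: "nat \<Rightarrow> complex fps" where
  "tau i = fps_nth tau_gf i"

definition tau_prev :: "nat \<Rightarrow> complex fps" where
  "tau_prev i = (if i = 0 then 0 else tau (i - 1))"

definition tser :: "complex fps" where
  "tser = (THE t. fps_X ^ 3 = t * (1 - t) ^ 2 \<and> (\<forall>k<6. fps_nth t k = fps_nth (fps_X ^ 3 :: complex fps) k))"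

definition Tmat :: "nat \<Rightarrow> complex fps mat" where
  "Tmat h = mat h h (\<lambda>(p, q).
     if q = p then 1
     else if q = p + 1 then - 2 * fps_X
     else if q = p + 2 then fps_X ^ 2
     else if p = q + 1 then - (fps_X ^ 2)
     else 0)"

definition Dh :: "nat \<Rightarrow> complex fps" where
  "Dh h = det (Tmat h)"

text \<open>D_{n,i}: determinant of (T_n)^T with its i-th column (columns numbered 1..n)
  replaced by (1,0,...,0)^T.\<close>
definition Dni :: "nat \<Rightarrow> nat \<Rightarrow> complex fps" where
  "Dni n i = det (mat n n (\<lambda>(p, q).
      if q = i - 1 then (if p = 0 then 1 else 0) else transpose_mat (Tmat n) $$ (p, q)))"

definition is_ring_hom :: "('a :: ring_1 \<Rightarrow> 'b :: ring_1) \<Rightarrow> bool" where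
  "is_ring_hom \<phi> \<longleftrightarrow> \<phi> 1 = 1 \<and> (\<forall>x y. \<phi> (x + y) = \<phi> x + \<phi> y) \<and> (\<forall>x y. \<phi> (x * y) = \<phi> x * \<phi> y)"

end

theory Submission
  imports Defs
begin

(* Since z^3 = t (1 - t)^2, the denominator of the generating function of the tau_i factors as
   (1 - t w) (1 - (2 - t) w + (1 - t)^2 w^2), which gives both generating-function identities.
   The coefficients of w / (1 - (2 - t) w + (1 - t)^2 w^2) form the Lucas sequence U_i with
   parameters 2 - t and (1 - t)^2, hence the closed form in its characteristic roots mu_2, mu_3,
   which are distinct because the discriminant t (4 - 3 t) is nonzero.
   For the limit, y_q = z^q (t / z^3)^(q+1) U_(q+1) satisfies T_n^T y = e_0 up to an error
   z^2 y_n = O(z^(n+2)) in the last entry, so by Cramer's rule D_(n,q+1) / D_n agrees with y_q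
   up to order z^(n+2). *)

fun lucas :: "'a :: comm_ring_1 \<Rightarrow> 'a \<Rightarrow> nat \<Rightarrow> 'a" where
  "lucas a b 0 = 0"
| "lucas a b (Suc 0) = 1"
| "lucas a b (Suc (Suc n)) = a * lucas a b (Suc n) - b * lucas a b n"

lemma lucas_mult_diff:
  fixes \<mu>2 \<mu>3 :: "'a :: comm_ring_1"
  assumes "a = \<mu>2 + \<mu>3" and "b = \<mu>2 * \<mu>3"
  shows "(\<mu>3 - \<mu>2) * lucas a b n = \<mu>3 ^ n - \<mu>2 ^ n"
  using assms
proof (induction a b n rule: lucas.induct)
  case (3 a b n)
  have IH: "(\<mu>3 - \<mu>2) * lucas a b (Suc n) = \<mu>3 ^ Suc n - \<mu>2 ^ Suc n"
    "(\<mu>3 - \<mu>2) * lucas a b n = \<mu>3 ^ n - \<mu>2 ^ n"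
    using 3 by simp_all
  have "(\<mu>3 - \<mu>2) * lucas a b (Suc (Suc n))
      = a * ((\<mu>3 - \<mu>2) * lucas a b (Suc n)) - b * ((\<mu>3 - \<mu>2) * lucas a b n)"
    by (simp add: algebra_simps)
  also have "\<dots> = \<mu>3 ^ Suc (Suc n) - \<mu>2 ^ Suc (Suc n)"
    unfolding IH by (simp add: 3(3,4) algebra_simps)
  finally show ?case .
qed simp_all

lemma lucas_closed_form:
  fixes \<mu>2 \<mu>3 :: "'a :: field"
  assumes "\<mu>3 \<noteq> \<mu>2"
  shows "lucas (\<mu>2 + \<mu>3) (\<mu>2 * \<mu>3) n = (\<mu>3 ^ n - \<mu>2 ^ n) / (\<mu>3 - \<mu>2)"
  using lucas_mult_diff[OF refl refl, of \<mu>3 \<mu>2 n] assms by (simp add: field_simps)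

lemma (in comm_ring_hom) hom_lucas: "hom (lucas a b n) = lucas (hom a) (hom b) n"
  by (induction a b n rule: lucas.induct) (simp_all add: hom_distribs)

lemma is_ring_hom_imp_comm_ring_hom:
  assumes "is_ring_hom \<phi>"
  shows "comm_ring_hom \<phi>"
proof -
  have add: "\<phi> (x + y) = \<phi> x + \<phi> y" and mult: "\<phi> (x * y) = \<phi> x * \<phi> y" for x y
    using assms by (simp_all add: is_ring_hom_def)
  have "\<phi> 0 = 0" using add[of 0 0] by simp
  then show ?thesis using assms add mult by unfold_locales (simp_all add: is_ring_hom_def)
qed

lemma lucas_scaled:
  fixes t u :: "'a :: comm_ring_1"
  assumes u: "u * (1 - t) ^ 2 = 1"
  defines "d \<equiv> \<lambda>n. u ^ n * lucas (2 - t) ((1 - t) ^ 2) n"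
  shows lucas_scaled_base: "d 1 - t * (1 - t) ^ 2 * d 2 = 1"
    and lucas_scaled_step: "d (n + 2) - 2 * d (n + 1) + d n = t * (1 - t) ^ 2 * d (n + 3)"
proof -
  have rec: "(1 - t) ^ 2 * d (m + 2) = (2 - t) * d (m + 1) - d m" for m
  proof -
    have "(1 - t) ^ 2 * d (m + 2) = (u * (1 - t) ^ 2) * (2 - t) * d (m + 1)
        - (u * (1 - t) ^ 2) ^ 2 * d m"
      by (simp add: d_def algebra_simps power2_eq_square)
    then show ?thesis by (simp add: u)
  qed
  show "d 1 - t * (1 - t) ^ 2 * d 2 = 1"
  proof -
    have "d 1 - t * (1 - t) ^ 2 * d 2 = u * (1 - t * (2 - t) * (u * (1 - t) ^ 2))"
      by (simp add: d_def eval_nat_numeral algebra_simps)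
    also have "\<dots> = u * (1 - t) ^ 2"
      by (subst u) (simp add: algebra_simps power2_eq_square)
    finally show ?thesis by (simp add: u)
  qed
  have "d (n + 2) - 2 * d (n + 1) + d n = t * ((2 - t) * d (n + 2) - d (n + 1))"
    using rec[of n] by (simp add: algebra_simps power2_eq_square)
  also have "\<dots> = t * (1 - t) ^ 2 * d (n + 3)"
    using rec[of "n + 1"] by (simp add: mult.assoc eval_nat_numeral)
  finally show "d (n + 2) - 2 * d (n + 1) + d n = t * (1 - t) ^ 2 * d (n + 3)" .
qed

lemma fps_eq_divide_unit_iff:
  fixes f g h :: "'a :: {comm_ring_1, inverse} fps"
  assumes f0: "fps_nth f 0 * inverse (fps_nth f 0) = 1"
  shows "h = g / f \<longleftrightarrow> h * f = g"
proof -
  have "f * inverse f = 1"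
    using fps_right_inverse[OF f0] by (simp add: fps_inverse_def)
  moreover have "g / f = g * inverse f"
    using f0 by (intro fps_divide_unit') (auto simp: subdegree_eq_0_iff)
  ultimately show ?thesis
    by (metis mult.assoc mult.commute mult.right_neutral)
qed

lemma fps_X_div_quadratic_nth:
  fixes a b :: "'a :: {comm_ring_1, inverse}"
  assumes "inverse (1 :: 'a) = 1"
  shows "fps_nth (fps_X / (1 - fps_const a * fps_X + fps_const b * fps_X ^ 2)) n = lucas a b n"
proof -
  define P :: "'a fps" where "P = 1 - fps_const a * fps_X + fps_const b * fps_X ^ 2"
  have "Abs_fps (lucas a b) * P = fps_X"
  proof (rule fps_ext)
    fix m
    show "fps_nth (Abs_fps (lucas a b) * P) m = fps_nth fps_X m"
      unfolding P_def
      by (cases m; cases "m - 1") (auto simp: algebra_simps fps_X_power_mult_right_nth)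
  qed
  then have "Abs_fps (lucas a b) = fps_X / P"
    using fps_eq_divide_unit_iff[of P "Abs_fps (lucas a b)" fps_X] assms by (simp add: P_def)
  then show ?thesis
    unfolding P_def by (metis fps_nth_Abs_fps)
qed

lemma fps_cubic_solution_exists:
  fixes f :: "'a :: field fps"
  assumes "fps_nth f 0 = 0"
  shows "\<exists>s. fps_nth s 0 = 0 \<and> f = s * (1 - s) ^ 2"
proof -
  define g :: "'a fps" where "g = fps_X * (1 - fps_X) ^ 2"
  have g0: "fps_nth g 0 = 0" and g1: "fps_nth g 1 = 1"
    by (simp_all add: g_def power2_eq_square algebra_simps)
  define s where "s = fps_inv g oo f"
  have inv0: "fps_nth (fps_inv g) 0 = 0" by (simp add: fps_inv_def)
  have s0: "fps_nth s 0 = 0" by (simp add: s_def inv0)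
  have "g oo s = (g oo fps_inv g) oo f"
    unfolding s_def by (rule fps_compose_assoc[OF assms inv0])
  also have "\<dots> = f" using fps_inv_right[OF g0] g1 assms by simp
  finally have "f = g oo s" ..
  also have "\<dots> = s * (1 - s) ^ 2"
    unfolding g_def using s0
    by (simp add: fps_compose_mult_distrib fps_compose_power[symmetric] fps_compose_sub_distrib)
  finally show ?thesis using s0 by blast
qed

lemma fps_cubic_solution_unique:
  fixes f r s :: "'a :: idom fps"
  assumes "fps_nth r 0 = 0" "f = r * (1 - r) ^ 2"
    and "fps_nth s 0 = 0" "f = s * (1 - s) ^ 2"
  shows "r = s"
proof -
  have "(r - s) * (1 - 2 * (r + s) + r ^ 2 + r * s + s ^ 2) = r * (1 - r) ^ 2 - s * (1 - s) ^ 2"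
    by (simp add: algebra_simps power2_eq_square)
  also have "\<dots> = 0" using assms by simp
  finally have "(r - s) * (1 - 2 * (r + s) + r ^ 2 + r * s + s ^ 2) = 0" .
  moreover have "fps_nth (1 - 2 * (r + s) + r ^ 2 + r * s + s ^ 2) 0 = 1"
    using assms by (simp add: power2_eq_square)
  ultimately show ?thesis by (metis fps_zero_nth mult_eq_0_iff right_minus_eq zero_neq_one)
qed

lemma fps_cubic_solution_factor:
  fixes s :: "'a :: field fps"
  assumes "fps_nth s 0 = 0" and "fps_X ^ 3 = s * (1 - s) ^ 2"
  shows "s = fps_X ^ 3 * inverse ((1 - s) ^ 2)"
proof -
  have "fps_nth ((1 - s) ^ 2) 0 \<noteq> 0"
    using assms(1) by (simp add: fps_nth_power_0)
  then have "(1 - s) ^ 2 * inverse ((1 - s) ^ 2) = 1" by (rule inverse_mult_eq_1')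
  with assms(2) show ?thesis by (metis mult.assoc mult.right_neutral)
qed

lemma tser_char: "fps_nth tser 0 = 0" "fps_X ^ 3 = tser * (1 - tser) ^ 2"
proof -
  obtain s :: "complex fps" where s: "fps_nth s 0 = 0" "fps_X ^ 3 = s * (1 - s) ^ 2"
    using fps_cubic_solution_exists[of "fps_X ^ 3"] by auto
  define u where "u = inverse ((1 - s) ^ 2)"
  have su: "s = fps_X ^ 3 * u"
    unfolding u_def by (rule fps_cubic_solution_factor[OF s])
  have "s = fps_X ^ 3 + (2 * s ^ 2 - s ^ 3)"
    using s(2) by (simp add: algebra_simps power2_eq_square power3_eq_cube)
  also have "2 * s ^ 2 - s ^ 3 = fps_X ^ 6 * (2 * u ^ 2 - fps_X ^ 3 * u ^ 3)"
    unfolding su by (simp add: power_mult_distrib algebra_simps flip: power_mult power_add)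
  finally have low: "\<forall>k<6. fps_nth s k = fps_nth (fps_X ^ 3 :: complex fps) k"
    by (metis fps_X_power_mult_nth fps_add_nth add_0_right)
  have "tser = s"
    unfolding tser_def
  proof (rule the_equality)
    fix r :: "complex fps"
    assume r: "fps_X ^ 3 = r * (1 - r) ^ 2 \<and> (\<forall>k<6. fps_nth r k = fps_nth (fps_X ^ 3 :: complex fps) k)"
    then show "r = s" using fps_cubic_solution_unique[OF _ _ s] by auto
  qed (use s low in blast)
  with s show "fps_nth tser 0 = 0" "fps_X ^ 3 = tser * (1 - tser) ^ 2" by simp_all
qed

definition tser_unit :: "complex fps" where
  "tser_unit = inverse ((1 - tser) ^ 2)"

lemma tser_unit_mult: "tser_unit * (1 - tser) ^ 2 = 1"
  unfolding tser_unit_def using tser_char(1) by (intro inverse_mult_eq_1) (simp add: fps_nth_power_0)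

lemma tser_eq: "tser = fps_X ^ 3 * tser_unit"
  using fps_cubic_solution_factor[OF tser_char] by (simp add: tser_unit_def)

lemma tau_denominator_factor:
  "1 - 2 * fps_X + fps_X ^ 2 - fps_const (fps_X ^ 3) * fps_X ^ 3
   = (1 - fps_const tser * fps_X)
     * (1 - fps_const (2 - tser) * fps_X + fps_const ((1 - tser) ^ 2) * fps_X ^ 2)"
proof -
  have one: "fps_const (1 - tser) = 1 - fps_const tser"
    and two: "fps_const (2 - tser) = 2 - fps_const tser"
    by (metis fps_const_1_eq_1 fps_const_sub, metis fps_numeral_fps_const fps_const_sub)
  have cube: "fps_const (fps_X ^ 3) = fps_const tser * (1 - fps_const tser) ^ 2"
    and square: "fps_const ((1 - tser) ^ 2) = (1 - fps_const tser) ^ 2"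
    by (simp_all only: tser_char(2) fps_const_mult[symmetric] fps_const_power[symmetric] one)
  have "1 - 2 * x + x ^ 2 - c * (1 - c) ^ 2 * x ^ 3
      = (1 - c * x) * (1 - (2 - c) * x + (1 - c) ^ 2 * x ^ 2)" for c x :: "complex fps fps"
    by (simp add: algebra_simps power2_eq_square power3_eq_cube)
  then show ?thesis
    unfolding cube two square .
qed

lemma tau_shift_gf:
  "Abs_fps (\<lambda>i. tau i - tser * tau_prev i)
     = fps_X * (1 - fps_const tser * fps_X)
       / (1 - 2 * fps_X + fps_X ^ 2 - fps_const (fps_X ^ 3) * fps_X ^ 3)"
  "Abs_fps (\<lambda>i. tau i - tser * tau_prev i)
     = fps_X / (1 - fps_const (2 - tser) * fps_X + fps_const ((1 - tser) ^ 2) * fps_X ^ 2)"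
proof -
  define Q :: "complex fps fps" where "Q = 1 - 2 * fps_X + fps_X ^ 2 - fps_const (fps_X ^ 3) * fps_X ^ 3"
  define P :: "complex fps fps"
    where "P = 1 - fps_const (2 - tser) * fps_X + fps_const ((1 - tser) ^ 2) * fps_X ^ 2"
  define A where "A = Abs_fps (\<lambda>i. tau i - tser * tau_prev i)"
  have A: "A = tau_gf - fps_const tser * (fps_X * tau_gf)"
    by (rule fps_ext) (simp add: A_def tau_def tau_prev_def)
  have "tau_gf * Q = fps_X"
    using fps_eq_divide_unit_iff[of Q tau_gf fps_X] by (simp add: tau_gf_def Q_def)
  then have AQ: "A * Q = fps_X * (1 - fps_const tser * fps_X)"
    by (simp add: A algebra_simps)
  then show "A = fps_X * (1 - fps_const tser * fps_X) / Q"
    using fps_eq_divide_unit_iff[of Q] by (simp add: Q_def)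
  have "(A * P) * (1 - fps_const tser * fps_X) = fps_X * (1 - fps_const tser * fps_X)"
    using AQ tau_denominator_factor by (simp add: Q_def P_def ac_simps)
  moreover have "1 - fps_const tser * fps_X \<noteq> 0"
  proof -
    have "fps_nth (1 - fps_const tser * fps_X) 0 = 1" by simp
    then show ?thesis by (metis fps_zero_nth zero_neq_one)
  qed
  ultimately have "A * P = fps_X" by simp
  then show "A = fps_X / P"
    using fps_eq_divide_unit_iff[of P] by (simp add: P_def)
qed

lemma tau_diff_eq_lucas: "tau i - tser * tau_prev i = lucas (2 - tser) ((1 - tser) ^ 2) i"
  using arg_cong[OF tau_shift_gf(2), of "\<lambda>f. fps_nth f i"] fps_X_div_quadratic_nth[of "2 - tser"]
  by simp

lemma tser_discriminant_nonzero: "(2 - tser) ^ 2 - 4 * (1 - tser) ^ 2 \<noteq> 0"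
proof -
  have "(2 - tser) ^ 2 - 4 * (1 - tser) ^ 2 = tser * (4 - 3 * tser)"
    by (simp add: algebra_simps power2_eq_square)
  moreover have "tser \<noteq> 0" using tser_char(2) by auto
  moreover have "fps_nth (4 - 3 * tser) 0 \<noteq> 0" using tser_char(1) by simp
  ultimately show ?thesis by (metis fps_zero_nth mult_eq_0_iff)
qed

lemma tau_diff_closed_form:
  fixes \<phi> :: "complex fps \<Rightarrow> 'b :: field" and \<mu>2 \<mu>3 :: 'b
  assumes hom: "is_ring_hom \<phi>" and "inj \<phi>"
    and sum: "\<mu>2 + \<mu>3 = \<phi> (2 - tser)" and prod: "\<mu>2 * \<mu>3 = \<phi> ((1 - tser) ^ 2)"
  shows "\<phi> (tau i - tser * tau_prev i) = (\<mu>3 ^ i - \<mu>2 ^ i) / (\<mu>3 - \<mu>2)"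
proof -
  interpret comm_ring_hom \<phi> using hom by (rule is_ring_hom_imp_comm_ring_hom)
  have "\<phi> ((2 - tser) ^ 2 - 4 * (1 - tser) ^ 2) = \<phi> (2 - tser) ^ 2 - 4 * \<phi> ((1 - tser) ^ 2)"
    by (simp only: hom_minus hom_mult hom_numeral hom_power)
  also have "\<dots> = (\<mu>3 - \<mu>2) ^ 2"
    unfolding sum[symmetric] prod[symmetric] by (simp add: algebra_simps power2_eq_square)
  finally have "(\<mu>3 - \<mu>2) ^ 2 = \<phi> ((2 - tser) ^ 2 - 4 * (1 - tser) ^ 2)" ..
  then have "\<mu>3 \<noteq> \<mu>2"
    using tser_discriminant_nonzero \<open>inj \<phi>\<close> by (metis hom_zero injD power_zero_numeral right_minus_eq)
  then show ?thesis
    by (simp add: tau_diff_eq_lucas hom_lucas lucas_closed_form flip: sum prod)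
qed

lemma det_replace_col_eq_adj:
  fixes A :: "'a :: comm_ring_1 mat"
  assumes A: "A \<in> carrier_mat n n" and b: "b \<in> carrier_vec n" and k: "k < n"
  shows "det (replace_col A b k) = (adj_mat A *\<^sub>v b) $ k"
proof -
  have Ab: "replace_col A b k \<in> carrier_mat n n" using A by (auto simp: replace_col_def)
  have "(adj_mat A *\<^sub>v b) $ k = row (adj_mat A) k \<bullet> b" using adj_mat[OF A] b k by auto
  also have "\<dots> = det (replace_col A b k)" unfolding scalar_prod_def using b k A
    by (subst laplace_expansion_column[OF Ab k], auto intro!: sum.cong arg_cong[of _ _ det]
      arg_cong[of _ _ "\<lambda> x. _ * x"] eq_matI
      simp: replace_col_def adj_mat_def Matrix.row_def cofactor_def mat_delete_def ac_simps)
  finally show ?thesis by simp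
qed

lemma det_replace_col_affine:
  fixes A :: "'a :: comm_ring_1 mat"
  assumes A: "A \<in> carrier_mat n n" and y: "y \<in> carrier_vec n"
    and b: "b \<in> carrier_vec n" and v: "v \<in> carrier_vec n"
    and Ay: "A *\<^sub>v y = b + c \<cdot>\<^sub>v v" and j: "j < n"
  shows "det (replace_col A b j) = y $ j * det A - c * det (replace_col A v j)"
proof -
  have adj: "adj_mat A \<in> carrier_mat n n" using adj_mat(1)[OF A] .
  have "y $ j * det A = det (replace_col A (A *\<^sub>v y) j)"
    by (rule cramer_lemma_mat[OF A y j, symmetric])
  also have "\<dots> = (adj_mat A *\<^sub>v b) $ j + c * (adj_mat A *\<^sub>v v) $ j"
    unfolding Ay using A b v j adj
    by (simp add: det_replace_col_eq_adj mult_add_distrib_mat_vec mult_mat_vec)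
  also have "\<dots> = det (replace_col A b j) + c * det (replace_col A v j)"
    using A b v j by (simp add: det_replace_col_eq_adj)
  finally show ?thesis by (simp add: algebra_simps)
qed

(* The series y_q of the proof idea; tser_unit = t / z^3 by tser_eq. *)
definition Dlim :: "nat \<Rightarrow> complex fps" where
  "Dlim q = fps_X ^ q * (tser_unit ^ Suc q * lucas (2 - tser) ((1 - tser) ^ 2) (Suc q))"

lemma Dlim_rec:
  "Dlim p - 2 * fps_X * (if p = 0 then 0 else Dlim (p - 1))
   + fps_X ^ 2 * (if p < 2 then 0 else Dlim (p - 2)) - fps_X ^ 2 * Dlim (Suc p)
   = (if p = 0 then 1 else 0)"
proof -
  define d where "d n = tser_unit ^ n * lucas (2 - tser) ((1 - tser) ^ 2) n" for n
  have X3: "fps_X ^ 3 = tser * (1 - tser) ^ 2" by (rule tser_char(2))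
  have Dlim: "Dlim q = fps_X ^ q * d (Suc q)" for q by (simp add: Dlim_def d_def)
  show ?thesis
  proof (cases p)
    case 0
    have "Dlim 0 - fps_X ^ 2 * Dlim 1 = d 1 - fps_X ^ 3 * d 2"
      by (simp add: Dlim eval_nat_numeral mult.assoc)
    also have "\<dots> = d 1 - tser * (1 - tser) ^ 2 * d 2"
      unfolding X3 ..
    also have "\<dots> = 1"
      unfolding d_def by (rule lucas_scaled_base[OF tser_unit_mult])
    finally show ?thesis using 0 by simp
  next
    case (Suc m)
    have before: "fps_X ^ 2 * (if p < 2 then 0 else Dlim (p - 2)) = fps_X ^ p * d m"
      using Suc by (cases m) (simp_all add: Dlim d_def mult.assoc power2_eq_square)
    have "Dlim p - 2 * fps_X * Dlim m + fps_X ^ p * d m - fps_X ^ 2 * Dlim (Suc p)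
        = fps_X ^ p * (d (m + 2) - 2 * d (m + 1) + d m - fps_X ^ 3 * d (m + 3))"
      using Suc by (simp add: Dlim algebra_simps eval_nat_numeral)
    also have "\<dots> = 0"
      using lucas_scaled_step[OF tser_unit_mult, of m] by (simp add: d_def X3)
    finally show ?thesis using Suc before by simp
  qed
qed

lemma Tmat_carrier: "Tmat n \<in> carrier_mat n n"
  by (simp add: Tmat_def)

lemma Tmat_col_Dlim:
  assumes p: "p < n"
  shows "(\<Sum>r<n. Tmat n $$ (r, p) * Dlim r)
    = (if p = 0 then 1 else 0) + (if Suc p = n then fps_X ^ 2 * Dlim n else 0)"
proof -
  have entry: "Tmat n $$ (r, p) * Dlim r = (if r = p then Dlim p else 0)
     + (if r = p - 1 then - 2 * fps_X * (if p = 0 then 0 else Dlim (p - 1)) else 0)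
     + (if r = p - 2 then fps_X ^ 2 * (if p < 2 then 0 else Dlim (p - 2)) else 0)
     + (if r = Suc p then - (fps_X ^ 2) * Dlim (Suc p) else 0)" if r: "r < n" for r
    using r p by (auto simp: Tmat_def)
  have "(\<Sum>r<n. Tmat n $$ (r, p) * Dlim r) =
     Dlim p - 2 * fps_X * (if p = 0 then 0 else Dlim (p - 1))
     + fps_X ^ 2 * (if p < 2 then 0 else Dlim (p - 2))
     + (if Suc p < n then - (fps_X ^ 2) * Dlim (Suc p) else 0)"
    using p by (simp add: entry sum.distrib sum.delta less_imp_diff_less)
  also have "\<dots> = (if p = 0 then 1 else 0) + fps_X ^ 2 * Dlim (Suc p)
      + (if Suc p < n then - (fps_X ^ 2) * Dlim (Suc p) else 0)"
    using Dlim_rec[of p] by (simp add: algebra_simps split del: if_split)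
  also have "\<dots> = (if p = 0 then 1 else 0) + (if Suc p = n then fps_X ^ 2 * Dlim n else 0)"
    using p by auto
  finally show ?thesis .
qed

lemma transpose_Tmat_mult_Dlim:
  assumes "0 < n"
  shows "transpose_mat (Tmat n) *\<^sub>v vec n Dlim
    = unit_vec n 0 + (fps_X ^ 2 * Dlim n) \<cdot>\<^sub>v unit_vec n (n - 1)"
proof (rule eq_vecI)
  fix p assume "p < dim_vec (unit_vec n 0 + (fps_X ^ 2 * Dlim n) \<cdot>\<^sub>v unit_vec n (n - 1))"
  then have p: "p < n" by simp
  have "(transpose_mat (Tmat n) *\<^sub>v vec n Dlim) $ p = (\<Sum>r<n. Tmat n $$ (r, p) * Dlim r)"
    using p Tmat_carrier[of n]
    by (auto simp: scalar_prod_def lessThan_atLeast0 intro!: sum.cong)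
  also have "\<dots> = (unit_vec n 0 + (fps_X ^ 2 * Dlim n) \<cdot>\<^sub>v unit_vec n (n - 1)) $ p"
    using p assms by (auto simp: Tmat_col_Dlim)
  finally show "(transpose_mat (Tmat n) *\<^sub>v vec n Dlim) $ p
      = (unit_vec n 0 + (fps_X ^ 2 * Dlim n) \<cdot>\<^sub>v unit_vec n (n - 1)) $ p" .
qed (simp add: Tmat_carrier[THEN carrier_matD(2)])

lemma Dh_nth_0: "fps_nth (Dh n) 0 = 1"
proof -
  interpret comm_ring_hom "\<lambda>f :: complex fps. fps_nth f 0"
    by unfold_locales auto
  have "map_mat (\<lambda>f. fps_nth f 0) (Tmat n) = 1\<^sub>m n"
    by (rule eq_matI) (auto simp: Tmat_def)
  then show ?thesis
    unfolding Dh_def by (metis det_one hom_det)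
qed

lemma Dni_eq_replace_col:
  assumes "q < n"
  shows "Dni n (Suc q) = det (replace_col (transpose_mat (Tmat n)) (unit_vec n 0) q)"
  unfolding Dni_def replace_col_def using assms Tmat_carrier[of n]
  by (intro arg_cong[of _ _ det] eq_matI) auto

lemma Dni_div_Dh_nth:
  assumes q: "q < n" and k: "k < n + 2"
  shows "fps_nth (Dni n (Suc q) / Dh n) k = fps_nth (Dlim q) k"
proof -
  define A where "A = transpose_mat (Tmat n)"
  have A: "A \<in> carrier_mat n n" using Tmat_carrier by (simp add: A_def)
  define E where "E = tser_unit ^ Suc n * lucas (2 - tser) ((1 - tser) ^ 2) (Suc n)
    * det (replace_col A (unit_vec n (n - 1)) q)"
  have "A *\<^sub>v vec n Dlim = unit_vec n 0 + (fps_X ^ 2 * Dlim n) \<cdot>\<^sub>v unit_vec n (n - 1)"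
    using transpose_Tmat_mult_Dlim q by (simp add: A_def)
  from det_replace_col_affine[OF A _ _ _ this q]
  have Dni: "Dni n (Suc q) = Dlim q * Dh n - fps_X ^ (n + 2) * E"
    using q
    by (simp add: Dni_eq_replace_col Dlim_def E_def A_def Dh_def det_transpose[OF Tmat_carrier]
        power_add power2_eq_square algebra_simps)
  have "Dni n (Suc q) / Dh n = Dni n (Suc q) * inverse (Dh n)"
    using Dh_nth_0[of n] by (simp add: fps_divide_unit)
  also have "\<dots> = Dlim q * (Dh n * inverse (Dh n)) - fps_X ^ (n + 2) * (E * inverse (Dh n))"
    unfolding Dni by (simp add: algebra_simps)
  also have "\<dots> = Dlim q - fps_X ^ (n + 2) * (E * inverse (Dh n))"
    using Dh_nth_0[of n] by (simp add: inverse_mult_eq_1')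
  finally have "Dni n (Suc q) / Dh n = Dlim q - fps_X ^ (n + 2) * (E * inverse (Dh n))" .
  moreover have "fps_nth (fps_X ^ (n + 2) * (E * inverse (Dh n))) k = 0"
    using k by (simp only: fps_X_power_mult_nth) simp
  ultimately show ?thesis by simp
qed

lemma Dlim_eq:
  "tser ^ Suc q / fps_X ^ (2 * Suc q + 1) * lucas (2 - tser) ((1 - tser) ^ 2) (Suc q) = Dlim q"
proof -
  have "tser ^ Suc q = (fps_X ^ 3) ^ Suc q * tser_unit ^ Suc q"
    by (simp only: tser_eq power_mult_distrib)
  also have "(fps_X ^ 3) ^ Suc q = fps_X ^ (3 * Suc q)"
    by (simp only: power_mult)
  also have "3 * Suc q = (2 * Suc q + 1) + q" by simp
  finally have "tser ^ Suc q = fps_X ^ (2 * Suc q + 1) * (fps_X ^ q * tser_unit ^ Suc q)"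
    by (simp only: power_add mult.assoc)
  then have "tser ^ Suc q / fps_X ^ (2 * Suc q + 1) = fps_X ^ q * tser_unit ^ Suc q"
    by (simp add: nonzero_mult_div_cancel_left)
  then show ?thesis by (simp add: Dlim_def ac_simps)
qed

lemma Dni_div_Dh_tendsto: "(\<lambda>n. fps_nth (Dni n (Suc q) / Dh n) k) \<longlonglongrightarrow> fps_nth (Dlim q) k"
proof (rule tendsto_eventually)
  show "eventually (\<lambda>n. fps_nth (Dni n (Suc q) / Dh n) k = fps_nth (Dlim q) k) sequentially"
    using eventually_ge_at_top[of "max (Suc q) k"] by eventually_elim (simp add: Dni_div_Dh_nth)
qed

lemma Dni_div_Dh_limit:
  assumes "1 \<le> i"
  shows "(\<lambda>n. fps_nth (Dni n i / Dh n) k) \<longlonglongrightarrow>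
    fps_nth (tser ^ i / fps_X ^ (2 * i + 1)
      * fps_nth (fps_X / (1 - fps_const (2 - tser) * fps_X + fps_const ((1 - tser) ^ 2) * fps_X ^ 2)) i) k"
proof -
  obtain q where "i = Suc q" using assms by (cases i) auto
  then show ?thesis
    using Dni_div_Dh_tendsto by (simp only: fps_X_div_quadratic_nth fps_inverse_one Dlim_eq)
qed

theorem mainTheorem6:
  fixes \<phi> :: "complex fps \<Rightarrow> 'b :: field" and \<mu>2 \<mu>3 :: 'b
  shows
    "Abs_fps (\<lambda>i. tau i - tser * tau_prev i)
       = fps_X * (1 - fps_const tser * fps_X)
           / (1 - 2 * fps_X + fps_X ^ 2 - fps_const (fps_X ^ 3) * fps_X ^ 3)
   \<and> Abs_fps (\<lambda>i. tau i - tser * tau_prev i)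
       = fps_X / (1 - fps_const (2 - tser) * fps_X + fps_const ((1 - tser) ^ 2) * fps_X ^ 2)
   \<and> ((is_ring_hom \<phi> \<and> inj \<phi> \<and> \<mu>2 + \<mu>3 = \<phi> (2 - tser) \<and> \<mu>2 * \<mu>3 = \<phi> ((1 - tser) ^ 2))
       \<longrightarrow> (\<forall>i. \<phi> (tau i - tser * tau_prev i) = (\<mu>3 ^ i - \<mu>2 ^ i) / (\<mu>3 - \<mu>2)))
   \<and> (\<forall>i \<ge> 1. \<forall>k.
        (\<lambda>n. fps_nth (Dni n i / Dh n) k) \<longlonglongrightarrow>
        fps_nth (tser ^ i / fps_X ^ (2 * i + 1)
           * fps_nth (fps_X / (1 - fps_const (2 - tser) * fps_X + fps_const ((1 - tser) ^ 2) * fps_X ^ 2)) i) k)"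
  using tau_shift_gf tau_diff_closed_form Dni_div_Dh_limit by blast

end
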